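(* Let $n\ge 2$ be an integer and let $s$ be a positive integer with $2s \ge n + \frac{n}{\sqrt[4]{n}-1}$. Then \[ \frac{r_{2(s+1)}(n)}{n^{\frac{s}{2}}} \le \frac{r_{2s}(n)}{n^{\frac{s-1}{2}}}, \] i.e. $s\mapsto r_{2s}(n)/n^{(s-1)/2}$ is non-increasing on this range of $s$.
   Context: $r_s(n)=\#\{(x_1,\dots,x_s)\in\mathbb{Z}^s : x_1^2+\cdots+x_s^2=n\}$ is the number of representations of $n$ as a sum of $s$ squares. *)

theory Defs
  imports "HOL-Analysis.Analysis"
begin

definition r :: "nat \<Rightarrow> nat \<Rightarrow> nat" where
  "r s n = card {x :: nat \<Rightarrow> int. (\<forall>i\<ge>s. x i = 0) \<and> (\<Sum>i<s. (x i)^2) = int n}"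

end

theory Submission
  imports Defs
begin

text \<open>
  Write \<open>V m n\<close> for the set of integer vectors of length \<open>m\<close> with
  square sum \<open>n\<close>, so \<open>r m n = card (V m n)\<close>. A vector in \<open>V (m+1) n\<close> has at
  most \<open>n\<close> nonzero entries, hence at least \<open>m+1-n\<close> zero entries, and deleting a
  zero entry gives a vector of \<open>V m n\<close>; conversely a vector of \<open>V m n\<close>
  together with one of \<open>m+1\<close> insertion positions determines the pair. Double
  counting the pairs (vector, zero position) gives
      \<open>(m+1-n) * r (m+1) n \<le> (m+1) * r m n\<close>.
  With \<open>t = n^(1/4)\<close>, the hypothesis \<open>2s \<ge> n + n/(t-1)\<close> says exactly that
  \<open>x \<le> t (x-n)\<close> for every \<open>x \<ge> 2s\<close>, so the two steps from \<open>2s\<close> to \<open>2s+2\<close>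
  each lose at most a factor \<open>t\<close>: \<open>r (2s+2) n \<le> t^2 r (2s) n = sqrt n r (2s) n\<close>,
  which is the claim after dividing by \<open>n^(s/2) = n^((s-1)/2) sqrt n\<close>.
\<close>

definition sq_vectors :: "nat \<Rightarrow> nat \<Rightarrow> (nat \<Rightarrow> int) set" where
  "sq_vectors m n = {x. (\<forall>i\<ge>m. x i = 0) \<and> (\<Sum>i<m. (x i)^2) = int n}"

lemma r_eq_card_sq_vectors: "r m n = card (sq_vectors m n)"
  unfolding r_def sq_vectors_def by simp

lemma abs_le_power2_int: "\<bar>a::int\<bar> \<le> a^2"
proof (cases "a = 0")
  case False
  then have "\<bar>a\<bar> * 1 \<le> \<bar>a\<bar> * \<bar>a\<bar>" by (intro mult_left_mono) auto
  then show ?thesis by (simp add: power2_eq_square)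
qed simp

lemma sq_vectors_entry_bound:
  assumes "x \<in> sq_vectors m n" "i < m"
  shows "\<bar>x i\<bar> \<le> int n"
proof -
  have "(x i)^2 \<le> (\<Sum>j<m. (x j)^2)"
    using assms(2) by (intro member_le_sum) auto
  with assms(1) abs_le_power2_int[of "x i"] show ?thesis
    unfolding sq_vectors_def by simp
qed

text \<open>Finiteness: every vector is the zero-extension of a function
  \<open>{..<m} \<rightarrow> {-n..n}\<close>.\<close>
lemma finite_sq_vectors: "finite (sq_vectors m n)"
proof -
  let ?ext = "\<lambda>g i. if i < m then g i else 0"
  have "sq_vectors m n \<subseteq> ?ext ` PiE {..<m} (\<lambda>_. {-int n..int n})"
  proof
    fix x assume x: "x \<in> sq_vectors m n"
    have "restrict x {..<m} \<in> PiE {..<m} (\<lambda>_. {-int n..int n})"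
      using sq_vectors_entry_bound[OF x] by (force simp: abs_le_iff)
    moreover have "x = ?ext (restrict x {..<m})"
      using x unfolding sq_vectors_def by (auto simp: fun_eq_iff)
    ultimately show "x \<in> ?ext ` PiE {..<m} (\<lambda>_. {-int n..int n})" by blast
  qed
  then show ?thesis by (rule finite_subset) (intro finite_imageI finite_PiE; simp)
qed

lemma sq_vectors_support_card:
  assumes "x \<in> sq_vectors m n"
  shows "card {i\<in>{..<m}. x i \<noteq> 0} \<le> n"
proof -
  let ?S = "{i\<in>{..<m}. x i \<noteq> 0}"
  have "int (card ?S) = (\<Sum>i\<in>?S. 1)" by simp
  also have "\<dots> \<le> (\<Sum>i\<in>?S. (x i)^2)"
  proof (rule sum_mono)
    fix i assume "i \<in> ?S"
    then have "1 \<le> \<bar>x i\<bar>" by auto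
    then show "1 \<le> (x i)^2" using abs_le_power2_int[of "x i"] by linarith
  qed
  also have "\<dots> \<le> (\<Sum>i<m. (x i)^2)" by (intro sum_mono2) auto
  also have "\<dots> = int n" using assms unfolding sq_vectors_def by simp
  finally show ?thesis by simp
qed

definition insert_zero :: "nat \<Rightarrow> (nat \<Rightarrow> int) \<Rightarrow> nat \<Rightarrow> int" where
  "insert_zero i y = (\<lambda>t. if t < i then y t else if t = i then 0 else y (t - 1))"

definition delete_entry :: "nat \<Rightarrow> (nat \<Rightarrow> int) \<Rightarrow> nat \<Rightarrow> int" where
  "delete_entry i x = (\<lambda>t. if t < i then x t else x (t + 1))"

lemma insert_zero_delete_entry: "x i = 0 \<Longrightarrow> insert_zero i (delete_entry i x) = x"
  unfolding insert_zero_def delete_entry_def by (auto simp: fun_eq_iff)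

lemma delete_entry_sq_vectors:
  assumes "x \<in> sq_vectors (Suc m) n" "i \<le> m" "x i = 0"
  shows "delete_entry i x \<in> sq_vectors m n"
proof -
  have "(\<Sum>j<m. (delete_entry i x j)^2) = (\<Sum>j\<in>{..<Suc m}-{i}. (x j)^2)"
    by (rule sum.reindex_bij_witness[where i = "\<lambda>j. if j < i then j else j - 1"
          and j = "\<lambda>j. if j < i then j else j + 1"])
       (use assms(2) in \<open>auto simp: delete_entry_def split: if_splits\<close>)
  also have "\<dots> = (\<Sum>j<Suc m. (x j)^2)"
    using assms(2,3) by (subst sum.remove[of _ i]) auto
  finally show ?thesis
    using assms(1,2) unfolding sq_vectors_def by (auto simp: delete_entry_def)
qed

text \<open>The double counting estimate: every vector in \<open>V (m+1) n\<close> has at least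
  \<open>m+1-n\<close> zero positions, and the pairs (vector, zero position) inject into
  \<open>V m n \<times> {..m}\<close> by deleting that zero.\<close>
lemma r_Suc_double_counting:
  "(Suc m - n) * r (Suc m) n \<le> Suc m * r m n"
proof -
  let ?P = "Sigma (sq_vectors (Suc m) n) (\<lambda>x. {i\<in>{..m}. x i = 0})"
  let ?ins = "\<lambda>(y, i). (insert_zero i y, i)"
  have "(Suc m - n) * r (Suc m) n = (\<Sum>x\<in>sq_vectors (Suc m) n. Suc m - n)"
    by (simp add: r_eq_card_sq_vectors)
  also have "\<dots> \<le> (\<Sum>x\<in>sq_vectors (Suc m) n. card {i\<in>{..m}. x i = 0})"
  proof (rule sum_mono)
    fix x assume x: "x \<in> sq_vectors (Suc m) n"
    have "{..m} = {i\<in>{..<Suc m}. x i \<noteq> 0} \<union> {i\<in>{..m}. x i = 0}" by auto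
    then have "Suc m \<le> card {i\<in>{..<Suc m}. x i \<noteq> 0} + card {i\<in>{..m}. x i = 0}"
      by (metis card_Un_le card_atMost)
    with sq_vectors_support_card[OF x] show "Suc m - n \<le> card {i\<in>{..m}. x i = 0}"
      by linarith
  qed
  also have "\<dots> = card ?P"
    using finite_sq_vectors by (subst card_SigmaI) auto
  also have "\<dots> \<le> card (?ins ` (sq_vectors m n \<times> {..m}))"
  proof (rule card_mono)
    show "finite (?ins ` (sq_vectors m n \<times> {..m}))"
      using finite_sq_vectors by auto
    show "?P \<subseteq> ?ins ` (sq_vectors m n \<times> {..m})"
    proof
      fix p assume "p \<in> ?P"
      then obtain x i where p: "p = (x, i)" "x \<in> sq_vectors (Suc m) n" "i \<le> m" "x i = 0"
        by auto
      then have "(delete_entry i x, i) \<in> sq_vectors m n \<times> {..m}"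
        using delete_entry_sq_vectors by auto
      moreover have "p = ?ins (delete_entry i x, i)"
        using p insert_zero_delete_entry by simp
      ultimately show "p \<in> ?ins ` (sq_vectors m n \<times> {..m})" by blast
    qed
  qed
  also have "\<dots> \<le> card (sq_vectors m n \<times> {..m})"
    using finite_sq_vectors by (intro card_image_le) auto
  also have "\<dots> = Suc m * r m n"
    by (simp add: card_cartesian_product r_eq_card_sq_vectors)
  finally show ?thesis .
qed

lemma r_Suc_le_mult:
  fixes c :: real
  assumes "n < Suc m" and ratio: "real (Suc m) \<le> c * (real (Suc m) - real n)"
  shows "real (r (Suc m) n) \<le> c * real (r m n)"
proof -
  have gap: "real (Suc m) - real n > 0" using assms(1) by simp
  have "real (Suc m - n) * real (r (Suc m) n) \<le> real (Suc m) * real (r m n)"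
    using r_Suc_double_counting[of m n] by (metis of_nat_mono of_nat_mult)
  then have "(real (Suc m) - real n) * real (r (Suc m) n) \<le> real (Suc m) * real (r m n)"
    using assms(1) by (simp add: of_nat_diff)
  also have "\<dots> \<le> (c * (real (Suc m) - real n)) * real (r m n)"
    using ratio by (intro mult_right_mono) auto
  finally show ?thesis using gap by (simp add: mult.commute mult.left_commute)
qed

lemma threshold_ratio:
  fixes t x n :: real
  assumes "t > 1" and "n \<ge> 0" and "n + n / (t - 1) \<le> x"
  shows "x \<le> t * (x - n)"
proof -
  have "(n + n / (t - 1)) * (t - 1) \<le> x * (t - 1)"
    using assms by (intro mult_right_mono) auto
  moreover have "(n + n / (t - 1)) * (t - 1) = n * t"
    using assms(1) by (simp add: field_simps)
  ultimately show ?thesis by (simp add: algebra_simps)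
qed

lemma power2_root4:
  fixes x :: real
  assumes "x \<ge> 0"
  shows "(root 4 x)^2 = sqrt x"
proof -
  have "((root 4 x)^2)^2 = x" using assms by (simp add: power_mult[symmetric])
  then show ?thesis by (metis real_sqrt_abs abs_of_nonneg zero_le_power2)
qed

theorem lemma3p1:
  fixes n s :: nat
  assumes "n \<ge> 2" and "s \<ge> 1"
    and "2 * real s \<ge> real n + real n / (root 4 (real n) - 1)"
  shows "real (r (2 * (s + 1)) n) / real n powr (real s / 2)
           \<le> real (r (2 * s) n) / real n powr ((real s - 1) / 2)"
proof -
  define t where "t = root 4 (real n)"
  have t: "t > 1" unfolding t_def using assms(1) by (simp add: real_root_gt_1_iff)
  have threshold: "real n + real n / (t - 1) \<le> 2 * real s"
    using assms(3) unfolding t_def .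
  have "real n / (t - 1) > 0" using t assms(1) by simp
  then have below: "n < 2 * s" using threshold by linarith
  have ratio: "real (Suc m) \<le> t * (real (Suc m) - real n)" if "2 * s \<le> m" for m
    using threshold_ratio[OF t, of "real n" "real (Suc m)"] threshold that by simp
  have "real (r (Suc (Suc (2 * s))) n) \<le> t * real (r (Suc (2 * s)) n)"
    using r_Suc_le_mult[OF _ ratio] below by simp
  also have "\<dots> \<le> t * (t * real (r (2 * s) n))"
    using r_Suc_le_mult[OF _ ratio] below t by (intro mult_left_mono) auto
  also have "\<dots> = t^2 * real (r (2 * s) n)" by (simp add: power2_eq_square)
  also have "t^2 = sqrt (real n)" unfolding t_def by (simp add: power2_root4)
  finally have main: "real (r (2 * (s + 1)) n) \<le> sqrt (real n) * real (r (2 * s) n)"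
    by (simp add: mult.commute)
  have "real n powr (real s / 2) = real n powr ((real s - 1) / 2) * sqrt (real n)"
    using assms(1) by (simp add: powr_half_sqrt[symmetric] powr_add[symmetric] field_simps)
  with main assms(1) show ?thesis
    by (simp add: divide_simps mult.commute mult.left_commute)
qed

end
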